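(* Let $k\ge3$ and $p=p(n)=O(1/n)$. Let $\theta$ be a finite rooted tree with vertex set contained in $\mathbb R$, let $\tau_1,\tau_2\in\mathcal S_k(\theta)$ and let $\omega\geq0$ be an integer. With $(\tilde G,\hat\sigma_1,\hat\sigma_2)$ drawn from $\tilde\pi_{n,p}$, $$\tilde\pi_{n,p}\left[\left|Q_{\theta,\tau_1,\tau_2,\omega}(\tilde G,\hat\sigma_1,\hat\sigma_2)-\mathbb E[Q_{\theta,\tau_1,\tau_2,\omega}(\tilde G,\hat\sigma_1,\hat\sigma_2)]\right|>n^{-1/3}\right]\leq\exp(-\Omega(\ln^2n)).$$
   Context: $\mathcal S_k(G)$ is the set of proper $k$-colorings of a graph $G$. The binomial planted replica model $\tilde\pi_{n,p}$ is the distribution of $(\tilde G,\hat\sigma_1,\hat\sigma_2)$ obtained by choosing $\hat\sigma_1,\hat\sigma_2:[n]\to[k]$ independently and uniformly, and then including each pair $\{u,v\}\subset[n]$ with $\hat\sigma_1(u)\ne\hat\sigma_1(v)$ and $\hat\sigma_2(u)\ne\hat\sigma_2(v)$ as an edge independently with probability $p$. For a graph $G$, $v\in V(G)$, a map $\sigma$ on $V(G)$, $\partial^\omega(G,v,\sigma)$ is the subgraph induced on vertices at distance at most $\omega$ from $v$, rooted at $v$, with the restriction of $\sigma$. Two rooted colored graphs $(G,v,\sigma),(G',v',\sigma')$ with vertex sets in $\mathbb R$ are isomorphic ($\cong$) if there is a graph isomorphism $\varphi$ with $\varphi(v)=v'$, $\sigma=\sigma'\circ\varphi$ and $u<w\Rightarrow\varphi(u)<\varphi(w)$.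 $Q_{\theta,\tau_1,\tau_2,\omega}(G,\sigma_1,\sigma_2)=\frac1n\sum_{v\in[n]}\mathbf 1\{\partial^\omega(G,v,\sigma_1)\cong(\theta,\tau_1)\}\mathbf 1\{\partial^\omega(G,v,\sigma_2)\cong(\theta,\tau_2)\}$. *)

theory Defs
  imports "HOL-Probability.Probability" "HOL-Library.Landau_Symbols"
begin

type_synonym rgraph = "real set \<times> real set set"

definition wf_graph :: "rgraph \<Rightarrow> bool" where
  "wf_graph G \<longleftrightarrow> finite (fst G) \<and>
     (\<forall>e\<in>snd G. \<exists>u w. u \<noteq> w \<and> u \<in> fst G \<and> w \<in> fst G \<and> e = {u, w})"

definition adj :: "rgraph \<Rightarrow> real \<Rightarrow> real \<Rightarrow> bool" where
  "adj G u w \<longleftrightarrow> {u, w} \<in> snd G"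

fun dist_ball :: "rgraph \<Rightarrow> real \<Rightarrow> nat \<Rightarrow> real set" where
  "dist_ball G v 0 = {v}"
| "dist_ball G v (Suc m) =
     dist_ball G v m \<union> {u \<in> fst G. \<exists>w\<in>dist_ball G v m. adj G w u}"

definition connected_graph :: "rgraph \<Rightarrow> bool" where
  "connected_graph G \<longleftrightarrow> (\<forall>u\<in>fst G. \<forall>w\<in>fst G. \<exists>m. w \<in> dist_ball G u m)"

definition is_cycle :: "rgraph \<Rightarrow> real list \<Rightarrow> bool" where
  "is_cycle G xs \<longleftrightarrow> length xs \<ge> 3 \<and> distinct xs \<and> set xs \<subseteq> fst G \<and>
     (\<forall>i. Suc i < length xs \<longrightarrow> adj G (xs ! i) (xs ! Suc i)) \<and>
     adj G (last xs) (hd xs)"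

definition is_tree :: "rgraph \<Rightarrow> bool" where
  "is_tree G \<longleftrightarrow> wf_graph G \<and> fst G \<noteq> {} \<and> connected_graph G \<and>
     \<not> (\<exists>xs. is_cycle G xs)"

definition proper_colorings :: "nat \<Rightarrow> rgraph \<Rightarrow> (real \<Rightarrow> nat) set" where
  "proper_colorings k G = {\<sigma>. (\<forall>v\<in>fst G. \<sigma> v \<in> {1..k}) \<and>
     (\<forall>u\<in>fst G. \<forall>w\<in>fst G. adj G u w \<longrightarrow> \<sigma> u \<noteq> \<sigma> w)}"

definition induced :: "rgraph \<Rightarrow> real set \<Rightarrow> rgraph" where
  "induced G B = (B \<inter> fst G, {e \<in> snd G. e \<subseteq> B})"

text \<open>The depth-\<omega> neighbourhood of v (rooted at v); the colouring is carried
separately and only compared on its vertex set, i.e. restricted.\<close>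
definition nbhd :: "rgraph \<Rightarrow> real \<Rightarrow> nat \<Rightarrow> rgraph" where
  "nbhd G v \<omega> = induced G (dist_ball G v \<omega>)"

definition rooted_iso ::
  "rgraph \<Rightarrow> real \<Rightarrow> (real \<Rightarrow> nat) \<Rightarrow> rgraph \<Rightarrow> real \<Rightarrow> (real \<Rightarrow> nat) \<Rightarrow> bool" where
  "rooted_iso G v \<sigma> G' v' \<sigma>' \<longleftrightarrow> (\<exists>\<phi>. bij_betw \<phi> (fst G) (fst G') \<and>
     (\<forall>u\<in>fst G. \<forall>w\<in>fst G. adj G u w \<longleftrightarrow> adj G' (\<phi> u) (\<phi> w)) \<and>
     \<phi> v = v' \<and>
     (\<forall>u\<in>fst G. \<sigma> u = \<sigma>' (\<phi> u)) \<and>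
     (\<forall>u\<in>fst G. \<forall>w\<in>fst G. u < w \<longrightarrow> \<phi> u < \<phi> w))"

definition vset :: "nat \<Rightarrow> real set" where
  "vset n = real ` {1..n}"

definition col_maps :: "nat \<Rightarrow> nat \<Rightarrow> (real \<Rightarrow> nat) set" where
  "col_maps n k = PiE (vset n) (\<lambda>_. {1..k})"

definition allowed_pairs :: "nat \<Rightarrow> (real \<Rightarrow> nat) \<Rightarrow> (real \<Rightarrow> nat) \<Rightarrow> real set set" where
  "allowed_pairs n \<sigma>1 \<sigma>2 = {{u, w} | u w. u \<in> vset n \<and> w \<in> vset n \<and> u \<noteq> w \<and>
      \<sigma>1 u \<noteq> \<sigma>1 w \<and> \<sigma>2 u \<noteq> \<sigma>2 w}"

definition random_edges :: "real \<Rightarrow> real set set \<Rightarrow> real set set pmf" where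
  "random_edges p A = map_pmf (\<lambda>f. {e \<in> A. f e}) (Pi_pmf A False (\<lambda>_. bernoulli_pmf p))"

definition planted_replica ::
  "nat \<Rightarrow> nat \<Rightarrow> real \<Rightarrow> (rgraph \<times> (real \<Rightarrow> nat) \<times> (real \<Rightarrow> nat)) pmf" where
  "planted_replica k n p =
     do { \<sigma>1 \<leftarrow> pmf_of_set (col_maps n k);
          \<sigma>2 \<leftarrow> pmf_of_set (col_maps n k);
          E \<leftarrow> random_edges p (allowed_pairs n \<sigma>1 \<sigma>2);
          return_pmf ((vset n, E), \<sigma>1, \<sigma>2) }"

definition Qstat ::
  "nat \<Rightarrow> rgraph \<Rightarrow> real \<Rightarrow> (real \<Rightarrow> nat) \<Rightarrow> (real \<Rightarrow> nat) \<Rightarrow> nat \<Rightarrow>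
   rgraph \<times> (real \<Rightarrow> nat) \<times> (real \<Rightarrow> nat) \<Rightarrow> real" where
  "Qstat n \<theta> r \<tau>1 \<tau>2 \<omega> X = (case X of (G, \<sigma>1, \<sigma>2) \<Rightarrow>
     (1 / real n) * (\<Sum>v\<in>vset n.
        of_bool (rooted_iso (nbhd G v \<omega>) v \<sigma>1 \<theta> r \<tau>1) *
        of_bool (rooted_iso (nbhd G v \<omega>) v \<sigma>2 \<theta> r \<tau>2)))"

end

theory Submission
  imports Defs
begin

text \<open>Write the planted replica model as a product of independent coordinates: the two colours
  of each vertex and one coin per pair of vertices. Grouping every coordinate with the larger of its
  vertices gives \<open>n\<close> independent blocks, and resampling one block changes the graph only at that
  vertex. If all degrees are at most \<open>\<Delta>\<close>, this moves the statistic \<open>Q\<close> by at most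
  \<open>2 (\<Delta> + 1)^\<omega> / n\<close>, while degrees exceed \<open>\<Delta> \<approx> ln\<^sup>2 n\<close> only with probability
  \<open>n exp (- ln\<^sup>2 n)\<close>. McDiarmid's inequality, applied to the Lipschitz extension of \<open>Q\<close> from the
  configurations of bounded degree, bounds the probability of a deviation beyond \<open>n^(-1/3)\<close> by
  \<open>n exp (- ln\<^sup>2 n) + 2 exp (- n^(1/3) / polylog n) \<le> exp (- ln\<^sup>2 n / 2)\<close>.\<close>

section \<open>McDiarmid's inequality for finite product distributions\<close>

lemma finite_set_Pi_pmf:
  assumes "finite A" "\<And>i. finite (set_pmf (D i))"
  shows "finite (set_pmf (Pi_pmf A d D))"
proof -
  have "set_pmf (Pi_pmf A d D) \<subseteq> PiE_dflt A d (set_pmf \<circ> D)"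
    using set_Pi_pmf_subset'[OF assms(1), of d D] by simp
  moreover have "finite (PiE_dflt A d (set_pmf \<circ> D))"
    using assms by (intro finite_PiE_dflt) auto
  ultimately show ?thesis by (rule finite_subset)
qed

lemma expectation_pair_pmf_finite:
  fixes h :: "'a \<times> 'b \<Rightarrow> real"
  assumes fa: "finite (set_pmf A)" and fb: "finite (set_pmf B)"
  shows "measure_pmf.expectation (pair_pmf A B) h =
         measure_pmf.expectation A (\<lambda>a. measure_pmf.expectation B (\<lambda>b. h (a, b)))"
proof -
  have "measure_pmf.expectation (pair_pmf A B) h =
        (\<Sum>x\<in>set_pmf A \<times> set_pmf B. h x * pmf (pair_pmf A B) x)"
    using fa fb by (intro integral_measure_pmf_real) auto
  also have "\<dots> = (\<Sum>a\<in>set_pmf A. \<Sum>b\<in>set_pmf B. h (a, b) * (pmf A a * pmf B b))"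
    by (subst sum.cartesian_product) (auto intro!: sum.cong simp: pmf_pair)
  also have "\<dots> = (\<Sum>a\<in>set_pmf A. (\<Sum>b\<in>set_pmf B. h (a, b) * pmf B b) * pmf A a)"
    by (simp add: sum_distrib_right sum_distrib_left mult_ac)
  also have "\<dots> = measure_pmf.expectation A (\<lambda>a. measure_pmf.expectation B (\<lambda>b. h (a, b)))"
    using fa fb by (subst integral_measure_pmf_real[where A="set_pmf A"])
      (auto intro!: sum.cong simp: integral_measure_pmf_real[where A="set_pmf B"])
  finally show ?thesis .
qed

lemma hoeffding_lemma_pmf:
  fixes h :: "'a \<Rightarrow> real"
  assumes fin: "finite (set_pmf M)" and l: "l > 0"
    and c: "\<And>x y. x \<in> set_pmf M \<Longrightarrow> y \<in> set_pmf M \<Longrightarrow> \<bar>h x - h y\<bar> \<le> c"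
  shows "measure_pmf.expectation M (\<lambda>x. exp (l * (h x - measure_pmf.expectation M h)))
          \<le> exp (l\<^sup>2 * c\<^sup>2 / 2)"
proof -
  obtain x0 where x0: "x0 \<in> set_pmf M" using set_pmf_not_empty[of M] by blast
  interpret interval_bounded_random_variable "measure_pmf M" h "h x0 - c" "h x0 + c"
  proof
    show "AE x in measure_pmf M. h x \<in> {h x0 - c..h x0 + c}"
      using c x0 by (intro AE_pmfI) (force simp: abs_le_iff)
  qed auto
  have "nn_integral M (\<lambda>x. exp (l * (h x - measure_pmf.expectation M h)))
        \<le> ennreal (exp (l\<^sup>2 * (h x0 + c - (h x0 - c))\<^sup>2 / 8))"
    by (rule Hoeffdings_lemma_nn_integral[OF l])
  also have "l\<^sup>2 * (h x0 + c - (h x0 - c))\<^sup>2 / 8 = l\<^sup>2 * c\<^sup>2 / 2"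
    by (simp add: power2_eq_square algebra_simps)
  also have "nn_integral M (\<lambda>x. exp (l * (h x - measure_pmf.expectation M h))) =
      ennreal (measure_pmf.expectation M (\<lambda>x. exp (l * (h x - measure_pmf.expectation M h))))"
    by (intro nn_integral_eq_integral integrable_measure_pmf_finite fin) auto
  finally show ?thesis
    by (subst (asm) ennreal_le_iff) auto
qed

lemma abs_expectation_diff_le_pmf:
  fixes f g :: "'a \<Rightarrow> real"
  assumes fin: "finite (set_pmf M)" and c: "\<And>x. x \<in> set_pmf M \<Longrightarrow> \<bar>f x - g x\<bar> \<le> c"
  shows "\<bar>measure_pmf.expectation M f - measure_pmf.expectation M g\<bar> \<le> c"
proof -
  have "\<bar>measure_pmf.expectation M f - measure_pmf.expectation M g\<bar> =
        \<bar>measure_pmf.expectation M (\<lambda>x. f x - g x)\<bar>"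
    using fin by (subst Bochner_Integration.integral_diff) (auto intro: integrable_measure_pmf_finite)
  also have "\<dots> \<le> measure_pmf.expectation M (\<lambda>x. \<bar>f x - g x\<bar>)"
    by (rule integral_abs_bound)
  also have "\<dots> \<le> measure_pmf.expectation M (\<lambda>x. c)"
    using fin c by (intro integral_mono_AE AE_pmfI) (auto intro: integrable_measure_pmf_finite)
  finally show ?thesis by simp
qed

text \<open>Induction over the blocks, applying Hoeffding's lemma to the conditional expectation given
  all other blocks.\<close>

lemma mcdiarmid_mgf_Pi_pmf:
  fixes D :: "'i \<Rightarrow> 'v pmf" and blk :: "'i \<Rightarrow> 'b" and c :: "'b \<Rightarrow> real"
  assumes J: "finite J" and K: "finite K" and l: "l > 0"
    and fin: "\<And>i. finite (set_pmf (D i))"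
  shows "(\<And>b x y. b \<in> K \<Longrightarrow> (\<And>i. blk i \<noteq> b \<Longrightarrow> x i = y i) \<Longrightarrow> \<bar>f x - f y\<bar> \<le> c b) \<Longrightarrow>
    measure_pmf.expectation (Pi_pmf {i\<in>J. blk i \<in> K} d D)
      (\<lambda>x. exp (l * (f x - measure_pmf.expectation (Pi_pmf {i\<in>J. blk i \<in> K} d D) f)))
    \<le> exp (l\<^sup>2 * (\<Sum>b\<in>K. (c b)\<^sup>2) / 2)"
  using K
proof (induction K arbitrary: f rule: finite_induct)
  case empty
  then show ?case by simp
next
  case (insert b K f)
  define A where "A = {i\<in>J. blk i = b}"
  define B where "B = {i\<in>J. blk i \<in> K}"
  have fin_AB: "finite A" "finite B" using J by (auto simp: A_def B_def)
  have "B \<inter> A = {}" using insert.hyps by (auto simp: A_def B_def)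
  define m where "m = (\<lambda>(z::'i\<Rightarrow>'v, y::'i\<Rightarrow>'v) i. if i \<in> B then z i else y i)"
  define PA where "PA = Pi_pmf A d D"
  define PB where "PB = Pi_pmf B d D"
  have P: "Pi_pmf {i\<in>J. blk i \<in> insert b K} d D = map_pmf m (pair_pmf PB PA)"
  proof -
    have "{i\<in>J. blk i \<in> insert b K} = B \<union> A" by (auto simp: A_def B_def)
    then show ?thesis
      unfolding PA_def PB_def m_def using Pi_pmf_union[OF fin_AB(2,1) \<open>B \<inter> A = {}\<close>] by simp
  qed
  have finA: "finite (set_pmf PA)" and finB: "finite (set_pmf PB)"
    unfolding PA_def PB_def using fin_AB fin by (auto intro: finite_set_Pi_pmf)
  define g where "g = (\<lambda>z. measure_pmf.expectation PA (\<lambda>y. f (m (z, y))))"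
  let ?E = "measure_pmf.expectation PB g"
  have Ef: "measure_pmf.expectation (map_pmf m (pair_pmf PB PA)) f = ?E"
    unfolding g_def by (simp add: expectation_pair_pmf_finite[OF finB finA])
  have IH: "measure_pmf.expectation PB (\<lambda>x. exp (l * (g x - ?E)))
      \<le> exp (l\<^sup>2 * (\<Sum>b\<in>K. (c b)\<^sup>2) / 2)"
    unfolding PB_def B_def
  proof (rule insert.IH)
    fix b' and x y :: "'i \<Rightarrow> 'v" assume "b' \<in> K" "\<And>i. blk i \<noteq> b' \<Longrightarrow> x i = y i"
    then show "\<bar>g x - g y\<bar> \<le> c b'"
      unfolding g_def using insert.prems
      by (intro abs_expectation_diff_le_pmf[OF finA]) (auto simp: m_def)
  qed
  have hoeffding: "measure_pmf.expectation PA (\<lambda>y. exp (l * (f (m (z, y)) - g z)))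
      \<le> exp (l\<^sup>2 * (c b)\<^sup>2 / 2)" for z
    unfolding g_def
  proof (rule hoeffding_lemma_pmf[OF finA l])
    fix y y' assume y: "y \<in> set_pmf PA" "y' \<in> set_pmf PA"
    show "\<bar>f (m (z, y)) - f (m (z, y'))\<bar> \<le> c b"
    proof (rule insert.prems)
      fix i assume "blk i \<noteq> b"
      then have "i \<notin> A" by (auto simp: A_def)
      then have "y i = d" "y' i = d"
        using y set_Pi_pmf_subset[OF fin_AB(1), of d D] by (auto simp: PA_def)
      then show "m (z, y) i = m (z, y') i" by (simp add: m_def)
    qed simp
  qed
  have "measure_pmf.expectation (map_pmf m (pair_pmf PB PA)) (\<lambda>x. exp (l * (f x - ?E)))
     = measure_pmf.expectation PB (\<lambda>z. measure_pmf.expectation PA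
         (\<lambda>y. exp (l * (g z - ?E)) * exp (l * (f (m (z, y)) - g z))))"
    by (simp add: expectation_pair_pmf_finite[OF finB finA] mult_exp_exp algebra_simps)
  also have "\<dots> = measure_pmf.expectation PB (\<lambda>z. exp (l * (g z - ?E)) *
         measure_pmf.expectation PA (\<lambda>y. exp (l * (f (m (z, y)) - g z))))"
    by simp
  also have "\<dots> \<le> measure_pmf.expectation PB (\<lambda>z. exp (l * (g z - ?E)) * exp (l\<^sup>2 * (c b)\<^sup>2 / 2))"
    using finB hoeffding by (intro integral_mono integrable_measure_pmf_finite mult_left_mono) auto
  also have "\<dots> = exp (l\<^sup>2 * (c b)\<^sup>2 / 2) * measure_pmf.expectation PB (\<lambda>z. exp (l * (g z - ?E)))"
    by (simp add: mult.commute)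
  also have "\<dots> \<le> exp (l\<^sup>2 * (c b)\<^sup>2 / 2) * exp (l\<^sup>2 * (\<Sum>b\<in>K. (c b)\<^sup>2) / 2)"
    using IH by (intro mult_left_mono) auto
  also have "\<dots> = exp (l\<^sup>2 * (\<Sum>b\<in>insert b K. (c b)\<^sup>2) / 2)"
    using insert.hyps by (simp add: mult_exp_exp algebra_simps add_divide_distrib)
  finally show ?case unfolding P Ef .
qed

lemma prob_ge_le_exp_mgf:
  fixes f :: "'a \<Rightarrow> real"
  assumes fin: "finite (set_pmf P)" and l: "l > 0"
    and mgf: "measure_pmf.expectation P (\<lambda>x. exp (l * (f x - E))) \<le> B"
  shows "measure_pmf.prob P {x. f x - E \<ge> s} \<le> exp (- l * s) * B"
proof -
  have "measure_pmf.prob P {x. f x - E \<ge> s} =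
      measure_pmf.expectation P (indicator {x. f x - E \<ge> s})"
    by simp
  also have "\<dots> \<le> measure_pmf.expectation P (\<lambda>x. exp (- l * s) * exp (l * (f x - E)))"
  proof (intro integral_mono integrable_measure_pmf_finite fin)
    fix x
    show "indicator {x. f x - E \<ge> s} x \<le> exp (- l * s) * exp (l * (f x - E))"
    proof (cases "f x - E \<ge> s")
      case True
      then have "l * s \<le> l * (f x - E)" using l by (intro mult_left_mono) auto
      then have "1 \<le> exp (- l * s + l * (f x - E))" by simp
      then show ?thesis using True by (simp only: mult_exp_exp indicator_simps) simp
    qed simp
  qed
  also have "\<dots> \<le> exp (- l * s) * B"
    using mgf by (simp add: mult_left_mono)
  finally show ?thesis .
qed

lemma mcdiarmid_Pi_pmf:
  fixes D :: "'i \<Rightarrow> 'v pmf" and blk :: "'i \<Rightarrow> 'b" and c :: "'b \<Rightarrow> real"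
  assumes J: "finite J" and K: "finite K" "blk ` J \<subseteq> K"
    and fin: "\<And>i. finite (set_pmf (D i))"
    and lip: "\<And>b x y. b \<in> K \<Longrightarrow> (\<And>i. blk i \<noteq> b \<Longrightarrow> x i = y i) \<Longrightarrow> \<bar>f x - f y\<bar> \<le> c b"
    and V: "(\<Sum>b\<in>K. (c b)\<^sup>2) \<le> V" "V > 0" and s: "s > 0"
  shows "measure_pmf.prob (Pi_pmf J d D)
           {x. \<bar>f x - measure_pmf.expectation (Pi_pmf J d D) f\<bar> \<ge> s} \<le> 2 * exp (- s\<^sup>2 / (2 * V))"
proof -
  define P where "P = Pi_pmf J d D"
  let ?E = "measure_pmf.expectation P"
  have finP: "finite (set_pmf P)" unfolding P_def using J fin by (rule finite_set_Pi_pmf)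
  define l where "l = s / V"
  have l: "l > 0" using V s by (simp add: l_def)
  have exponent: "- l * s + l\<^sup>2 * V / 2 = - s\<^sup>2 / (2 * V)"
    using V by (simp add: l_def power2_eq_square field_simps)
  have one_sided: "measure_pmf.prob P {x. h x - ?E h \<ge> s} \<le> exp (- s\<^sup>2 / (2 * V))"
    if "\<And>b x y. b \<in> K \<Longrightarrow> (\<And>i. blk i \<noteq> b \<Longrightarrow> x i = y i) \<Longrightarrow> \<bar>h x - h y\<bar> \<le> c b" for h
  proof -
    have "{i\<in>J. blk i \<in> K} = J" using K(2) by auto
    then have "?E (\<lambda>x. exp (l * (h x - ?E h))) \<le> exp (l\<^sup>2 * (\<Sum>b\<in>K. (c b)\<^sup>2) / 2)"
      using mcdiarmid_mgf_Pi_pmf[of J K l D blk h c d, OF J K(1) l fin] that unfolding P_def by simp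
    also have "\<dots> \<le> exp (l\<^sup>2 * V / 2)"
      using V by (auto intro!: mult_left_mono divide_right_mono)
    finally have "measure_pmf.prob P {x. h x - ?E h \<ge> s} \<le> exp (- l * s) * exp (l\<^sup>2 * V / 2)"
      by (rule prob_ge_le_exp_mgf[OF finP l])
    also have "\<dots> = exp (- s\<^sup>2 / (2 * V))"
      by (simp only: mult_exp_exp exponent)
    finally show ?thesis .
  qed
  have upper: "measure_pmf.prob P {x. f x - ?E f \<ge> s} \<le> exp (- s\<^sup>2 / (2 * V))"
    using lip by (rule one_sided)
  have lower: "measure_pmf.prob P {x. - f x - ?E (\<lambda>x. - f x) \<ge> s} \<le> exp (- s\<^sup>2 / (2 * V))"
    using lip by (intro one_sided) (simp add: abs_minus_commute)
  have "measure_pmf.prob P {x. \<bar>f x - ?E f\<bar> \<ge> s} \<le>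
      measure_pmf.prob P ({x. f x - ?E f \<ge> s} \<union> {x. - f x - ?E (\<lambda>x. - f x) \<ge> s})"
    by (intro measure_pmf.finite_measure_mono) auto
  also have "\<dots> \<le> measure_pmf.prob P {x. f x - ?E f \<ge> s} +
      measure_pmf.prob P {x. - f x - ?E (\<lambda>x. - f x) \<ge> s}"
    by (rule measure_subadditive) auto
  finally show ?thesis using upper lower unfolding P_def by simp
qed

section \<open>Concentration outside a bad event\<close>

definition diff_blocks :: "'i set \<Rightarrow> ('i \<Rightarrow> 'b) \<Rightarrow> ('i \<Rightarrow> 'v) \<Rightarrow> ('i \<Rightarrow> 'v) \<Rightarrow> 'b set" where
  "diff_blocks J blk x y = blk ` {i\<in>J. x i \<noteq> y i}"

lemma diff_blocks_self [simp]: "diff_blocks J blk x x = {}"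
  by (simp add: diff_blocks_def)

lemma finite_diff_blocks [simp]: "finite J \<Longrightarrow> finite (diff_blocks J blk x y)"
  by (simp add: diff_blocks_def)

lemma card_diff_blocks_le:
  "finite K \<Longrightarrow> blk ` J \<subseteq> K \<Longrightarrow> card (diff_blocks J blk x y) \<le> card K"
  by (intro card_mono) (auto simp: diff_blocks_def)

lemma eq_if_block_notin_diff_blocks: "i \<in> J \<Longrightarrow> blk i \<notin> diff_blocks J blk x y \<Longrightarrow> x i = y i"
  by (auto simp: diff_blocks_def)

lemma diff_blocks_change_block:
  "(\<And>i. blk i \<noteq> b \<Longrightarrow> x i = x' i) \<Longrightarrow> diff_blocks J blk x y \<subseteq> insert b (diff_blocks J blk x' y)"
  by (auto simp: diff_blocks_def)

text \<open>McShane's extension of \<open>F\<close> from \<open>S\<close>, for the metric counting the blocks in which two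
  points differ.\<close>

definition block_lipschitz_ext ::
  "'i set \<Rightarrow> ('i \<Rightarrow> 'b) \<Rightarrow> (('i \<Rightarrow> 'v) \<Rightarrow> real) \<Rightarrow> ('i \<Rightarrow> 'v) set \<Rightarrow> real \<Rightarrow> ('i \<Rightarrow> 'v) \<Rightarrow> real" where
  "block_lipschitz_ext J blk F S c x = Min ((\<lambda>y. F y + c * real (card (diff_blocks J blk x y))) ` S)"

lemma block_lipschitz_ext_eq:
  assumes "finite S" "x \<in> S" "\<And>y. y \<in> S \<Longrightarrow> F x \<le> F y + c * real (card (diff_blocks J blk x y))"
  shows "block_lipschitz_ext J blk F S c x = F x"
  unfolding block_lipschitz_ext_def
proof (rule antisym)
  show "Min ((\<lambda>y. F y + c * real (card (diff_blocks J blk x y))) ` S) \<le> F x"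
    using assms by (intro Min_le_iff[THEN iffD2]) (auto intro!: bexI[of _ x])
  show "F x \<le> Min ((\<lambda>y. F y + c * real (card (diff_blocks J blk x y))) ` S)"
    using assms by (subst Min_ge_iff) auto
qed

lemma block_lipschitz_ext_le:
  assumes J: "finite J" and S: "finite S" "S \<noteq> {}" and c: "c \<ge> 0"
    and agree: "\<And>i. blk i \<noteq> b \<Longrightarrow> x i = x' i"
  shows "block_lipschitz_ext J blk F S c x \<le> block_lipschitz_ext J blk F S c x' + c"
proof -
  let ?ext = "block_lipschitz_ext J blk F S c"
  have "?ext x' \<in> (\<lambda>y. F y + c * real (card (diff_blocks J blk x' y))) ` S"
    unfolding block_lipschitz_ext_def using S by (intro Min_in) auto
  then obtain y where y: "y \<in> S" "?ext x' = F y + c * real (card (diff_blocks J blk x' y))"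
    by blast
  have "card (diff_blocks J blk x y) \<le> card (insert b (diff_blocks J blk x' y))"
    using J by (intro card_mono diff_blocks_change_block agree) auto
  also have "\<dots> \<le> card (diff_blocks J blk x' y) + 1" using J by (simp add: card_insert_if)
  finally have "c * real (card (diff_blocks J blk x y)) \<le> c * (real (card (diff_blocks J blk x' y)) + 1)"
    using c by (intro mult_left_mono) auto
  moreover have "?ext x \<le> F y + c * real (card (diff_blocks J blk x y))"
    unfolding block_lipschitz_ext_def using S y(1) by (intro Min_le) auto
  ultimately show ?thesis using y(2) by (simp add: algebra_simps)
qed

lemma block_lipschitz_ext_lipschitz:
  assumes "finite J" "finite S" "S \<noteq> {}" "c \<ge> 0" "\<And>i. blk i \<noteq> b \<Longrightarrow> x i = x' i"
  shows "\<bar>block_lipschitz_ext J blk F S c x - block_lipschitz_ext J blk F S c x'\<bar> \<le> c"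
  using block_lipschitz_ext_le[of J S c blk b x x' F] block_lipschitz_ext_le[of J S c blk b x' x F] assms
  by (simp add: abs_le_iff)

lemma block_lipschitz_ext_bounds:
  assumes S: "finite S" "S \<noteq> {}" and c: "c \<ge> 0" and K: "finite K" "blk ` J \<subseteq> K"
    and F01: "\<And>y. y \<in> S \<Longrightarrow> 0 \<le> F y \<and> F y \<le> 1"
  shows "0 \<le> block_lipschitz_ext J blk F S c x \<and> block_lipschitz_ext J blk F S c x \<le> 1 + c * real (card K)"
proof
  show "0 \<le> block_lipschitz_ext J blk F S c x"
    unfolding block_lipschitz_ext_def using S F01 c by (subst Min_ge_iff) auto
  obtain y where y: "y \<in> S" using S by auto
  have "block_lipschitz_ext J blk F S c x \<le> F y + c * real (card (diff_blocks J blk x y))"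
    unfolding block_lipschitz_ext_def using S y by (intro Min_le) auto
  also have "\<dots> \<le> 1 + c * real (card K)"
    using F01[OF y] card_diff_blocks_le[OF K] c by (intro add_mono mult_left_mono) auto
  finally show "block_lipschitz_ext J blk F S c x \<le> 1 + c * real (card K)" .
qed

lemma abs_expectation_diff_le_prob:
  fixes f g :: "'a \<Rightarrow> real"
  assumes fin: "finite (set_pmf P)"
    and eq: "\<And>x. x \<in> S \<Longrightarrow> x \<in> set_pmf P \<Longrightarrow> f x = g x" and M: "\<And>x. \<bar>f x - g x\<bar> \<le> M"
  shows "\<bar>measure_pmf.expectation P f - measure_pmf.expectation P g\<bar> \<le> M * measure_pmf.prob P (- S)"
proof -
  have "\<bar>measure_pmf.expectation P f - measure_pmf.expectation P g\<bar> =
      \<bar>measure_pmf.expectation P (\<lambda>x. f x - g x)\<bar>"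
    using fin by (subst Bochner_Integration.integral_diff) (auto intro: integrable_measure_pmf_finite)
  also have "\<dots> \<le> measure_pmf.expectation P (\<lambda>x. \<bar>f x - g x\<bar>)" by (rule integral_abs_bound)
  also have "\<dots> \<le> measure_pmf.expectation P (\<lambda>x. M * indicator (- S) x)"
    using fin eq M
    by (intro integral_mono_AE AE_pmfI) (auto intro: integrable_measure_pmf_finite split: split_indicator)
  finally show ?thesis by simp
qed

lemma prob_deviation_le_approx:
  fixes F g :: "'a \<Rightarrow> real"
  assumes eq: "\<And>x. x \<in> S \<Longrightarrow> x \<in> set_pmf P \<Longrightarrow> F x = g x"
    and E: "\<bar>measure_pmf.expectation P F - measure_pmf.expectation P g\<bar> \<le> t / 2"
  shows "measure_pmf.prob P {x. \<bar>F x - measure_pmf.expectation P F\<bar> > t}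
    \<le> measure_pmf.prob P (- S) + measure_pmf.prob P {x. \<bar>g x - measure_pmf.expectation P g\<bar> \<ge> t / 2}"
proof -
  let ?E = "measure_pmf.expectation P"
  have "{x. \<bar>F x - ?E F\<bar> > t} \<inter> set_pmf P \<subseteq> - S \<union> {x. \<bar>g x - ?E g\<bar> \<ge> t / 2}"
  proof (intro subsetI)
    fix x assume x: "x \<in> {x. \<bar>F x - ?E F\<bar> > t} \<inter> set_pmf P"
    show "x \<in> - S \<union> {x. \<bar>g x - ?E g\<bar> \<ge> t / 2}"
    proof (cases "x \<in> S")
      case True
      then have "\<bar>g x - ?E F\<bar> > t" using x eq by auto
      then have "\<bar>g x - ?E g\<bar> \<ge> t / 2" using E by arith
      then show ?thesis by simp
    qed simp
  qed
  then have "measure_pmf.prob P {x. \<bar>F x - ?E F\<bar> > t}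
      \<le> measure_pmf.prob P (- S \<union> {x. \<bar>g x - ?E g\<bar> \<ge> t / 2})"
    by (subst measure_Int_set_pmf[symmetric]) (intro measure_pmf.finite_measure_mono, auto)
  also have "\<dots> \<le> measure_pmf.prob P (- S) + measure_pmf.prob P {x. \<bar>g x - ?E g\<bar> \<ge> t / 2}"
    by (rule measure_subadditive) auto
  finally show ?thesis .
qed

text \<open>McDiarmid's inequality is applied to the Lipschitz extension of \<open>F\<close> from \<open>S\<close>, whose
  expectation differs from that of \<open>F\<close> only through the bad event.\<close>

lemma mcdiarmid_Pi_pmf_bad_event:
  fixes F :: "('i \<Rightarrow> 'v) \<Rightarrow> real" and blk :: "'i \<Rightarrow> 'b"
    and J :: "'i set" and d :: 'v and D :: "'i \<Rightarrow> 'v pmf"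
  defines "P \<equiv> Pi_pmf J d D"
  assumes J: "finite J" and K: "finite K" "K \<noteq> {}" "blk ` J \<subseteq> K"
    and fin: "\<And>i. finite (set_pmf (D i))"
    and F01: "\<And>x. 0 \<le> F x \<and> F x \<le> 1"
    and lip: "\<And>x y. x \<in> S \<inter> set_pmf P \<Longrightarrow> y \<in> S \<inter> set_pmf P \<Longrightarrow>
                F x \<le> F y + c * real (card (diff_blocks J blk x y))"
    and c: "c > 0" and t: "t > 0"
    and bad: "measure_pmf.prob P (- S) \<le> \<beta>" "\<beta> < 1" "(1 + c * real (card K)) * \<beta> \<le> t / 2"
  shows "measure_pmf.prob P {x. \<bar>F x - measure_pmf.expectation P F\<bar> > t}
    \<le> \<beta> + 2 * exp (- (t / 2)\<^sup>2 / (2 * (real (card K) * c\<^sup>2)))"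
proof -
  let ?E = "measure_pmf.expectation P"
  have finP: "finite (set_pmf P)" unfolding P_def using J fin by (rule finite_set_Pi_pmf)
  define S0 where "S0 = S \<inter> set_pmf P"
  have fin_S0: "finite S0" using finP by (simp add: S0_def)
  have S0_ne: "S0 \<noteq> {}"
  proof
    assume "S0 = {}"
    then have "measure_pmf.prob P S = 0"
      by (metis S0_def Int_commute measure_Int_set_pmf measure_empty)
    then have "measure_pmf.prob P (- S) = 1"
      using measure_pmf.prob_compl[of S P] by (simp add: Compl_eq_Diff_UNIV)
    then show False using bad by simp
  qed
  define g where "g = block_lipschitz_ext J blk F S0 c"
  have gF: "F x = g x" if "x \<in> S" "x \<in> set_pmf P" for x
    unfolding g_def using fin_S0 that lip by (intro block_lipschitz_ext_eq[symmetric]) (auto simp: S0_def)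
  have g_bounds: "0 \<le> g x \<and> g x \<le> 1 + c * real (card K)" for x
    unfolding g_def using fin_S0 S0_ne c K F01 by (intro block_lipschitz_ext_bounds) auto
  have "\<bar>?E F - ?E g\<bar> \<le> (1 + c * real (card K)) * measure_pmf.prob P (- S)"
  proof (rule abs_expectation_diff_le_prob[OF finP gF])
    have "0 \<le> c * real (card K)" using c by simp
    then show "\<bar>F x - g x\<bar> \<le> 1 + c * real (card K)" for x
      using F01[of x] g_bounds[of x] by (simp add: abs_le_iff)
  qed
  also have "\<dots> \<le> (1 + c * real (card K)) * \<beta>"
    using bad(1) c by (intro mult_left_mono) auto
  also have "\<dots> \<le> t / 2" by (rule bad(3))
  finally have E_close: "\<bar>?E F - ?E g\<bar> \<le> t / 2" .
  have mcdiarmid: "measure_pmf.prob P {x. \<bar>g x - ?E g\<bar> \<ge> t / 2}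
      \<le> 2 * exp (- (t / 2)\<^sup>2 / (2 * (real (card K) * c\<^sup>2)))"
    unfolding P_def
  proof (rule mcdiarmid_Pi_pmf[OF J K(1,3) fin, where c = "\<lambda>_. c"])
    show "\<bar>g x - g y\<bar> \<le> c" if "\<And>i. blk i \<noteq> b \<Longrightarrow> x i = y i" for b x y
      unfolding g_def using J fin_S0 S0_ne c that by (intro block_lipschitz_ext_lipschitz) auto
  qed (use K c t in \<open>auto simp: card_gt_0_iff\<close>)
  have "measure_pmf.prob P {x. \<bar>F x - ?E F\<bar> > t}
      \<le> measure_pmf.prob P (- S) + measure_pmf.prob P {x. \<bar>g x - ?E g\<bar> \<ge> t / 2}"
    using gF E_close by (rule prob_deviation_le_approx)
  then show ?thesis using bad mcdiarmid by linarith
qed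

lemma adj_sym: "adj G u w = adj G w u"
  by (simp add: adj_def insert_commute)

lemma dist_ball_mono: "j \<le> j' \<Longrightarrow> dist_ball G v j \<subseteq> dist_ball G v j'"
  by (induction j') (auto simp: le_Suc_eq)

lemma dist_ball_first_step:
  "s \<in> dist_ball G w (Suc j) \<Longrightarrow> \<exists>a. s \<in> dist_ball G a j \<and> (a = w \<or> adj G w a \<and> a \<in> fst G)"
proof (induction j arbitrary: s)
  case 0
  then show ?case by auto
next
  case (Suc j)
  from Suc.prems consider "s \<in> dist_ball G w (Suc j)"
    | b where "s \<in> fst G" "b \<in> dist_ball G w (Suc j)" "adj G b s" by auto
  then show ?case
  proof cases
    case 1
    then obtain a where "s \<in> dist_ball G a j" "a = w \<or> adj G w a \<and> a \<in> fst G"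
      using Suc.IH by blast
    then show ?thesis by auto
  next
    case 2
    then obtain a where "b \<in> dist_ball G a j" "a = w \<or> adj G w a \<and> a \<in> fst G"
      using Suc.IH by blast
    then show ?thesis using 2 by (intro exI[of _ a]) auto
  qed
qed

lemma dist_ball_sym: "w \<in> fst G \<Longrightarrow> s \<in> dist_ball G w j \<Longrightarrow> w \<in> dist_ball G s j"
proof (induction j arbitrary: w)
  case 0
  then show ?case by simp
next
  case (Suc j)
  obtain a where a: "s \<in> dist_ball G a j" "a = w \<or> adj G w a \<and> a \<in> fst G"
    using dist_ball_first_step[OF Suc.prems(2)] by blast
  show ?case
  proof (cases "a = w")
    case True
    then show ?thesis using Suc.IH[OF Suc.prems(1)] a by auto
  next
    case False
    then have "adj G a w" "a \<in> dist_ball G s j" using Suc.IH a adj_sym[of G w a] by auto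
    then show ?thesis using Suc.prems(1) by auto
  qed
qed

lemma dist_ball_card_le:
  assumes fin: "finite (fst G)" and deg: "\<And>a. card {u\<in>fst G. adj G a u} \<le> \<Delta>"
  shows "finite (dist_ball G v j) \<and> card (dist_ball G v j) \<le> (\<Delta> + 1) ^ j"
proof (induction j)
  case 0
  then show ?case by simp
next
  case (Suc j)
  let ?B = "dist_ball G v j"
  let ?N = "\<lambda>w. {u\<in>fst G. adj G w u}"
  have sub: "dist_ball G v (Suc j) \<subseteq> ?B \<union> (\<Union>w\<in>?B. ?N w)" by auto
  have fin_U: "finite (?B \<union> (\<Union>w\<in>?B. ?N w))" using Suc.IH fin by auto
  have "card (dist_ball G v (Suc j)) \<le> card (?B \<union> (\<Union>w\<in>?B. ?N w))"
    by (rule card_mono[OF fin_U sub])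
  also have "\<dots> \<le> card ?B + card (\<Union>w\<in>?B. ?N w)" by (rule card_Un_le)
  also have "card (\<Union>w\<in>?B. ?N w) \<le> (\<Sum>w\<in>?B. card (?N w))"
    by (rule card_UN_le) (use Suc.IH in auto)
  also have "\<dots> \<le> (\<Sum>w\<in>?B. \<Delta>)" by (intro sum_mono deg)
  also have "card ?B + \<dots> = card ?B * (\<Delta> + 1)" by simp
  also have "\<dots> \<le> (\<Delta> + 1) ^ j * (\<Delta> + 1)" using Suc.IH by (intro mult_right_mono) auto
  finally show ?case using finite_subset[OF sub fin_U] by (simp add: mult.commute)
qed

lemma card_near_le:
  assumes fin: "finite (fst G)" and deg: "\<And>a. card {u\<in>fst G. adj G a u} \<le> \<Delta>" and T: "finite T"
  shows "card {w\<in>fst G. dist_ball G w R \<inter> T \<noteq> {}} \<le> card T * (\<Delta> + 1) ^ R"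
proof -
  have sub: "{w\<in>fst G. dist_ball G w R \<inter> T \<noteq> {}} \<subseteq> (\<Union>s\<in>T. dist_ball G s R)"
    using dist_ball_sym by blast
  have "card {w\<in>fst G. dist_ball G w R \<inter> T \<noteq> {}} \<le> card (\<Union>s\<in>T. dist_ball G s R)"
    using dist_ball_card_le[OF fin deg] T by (intro card_mono[OF _ sub]) auto
  also have "\<dots> \<le> (\<Sum>s\<in>T. card (dist_ball G s R))" by (rule card_UN_le[OF T])
  also have "\<dots> \<le> (\<Sum>s\<in>T. (\<Delta> + 1) ^ R)" using dist_ball_card_le[OF fin deg] by (intro sum_mono) auto
  finally show ?thesis by simp
qed

lemma dist_ball_subset_outside:
  assumes V: "fst G = fst G'"
    and adj_eq: "\<And>a b. a \<notin> T \<Longrightarrow> b \<notin> T \<Longrightarrow> adj G a b = adj G' a b"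
    and disj: "dist_ball G w R \<inter> T = {}"
  shows "j \<le> R \<Longrightarrow> dist_ball G w j \<subseteq> dist_ball G' w j"
proof (induction j)
  case 0
  then show ?case by simp
next
  case (Suc j)
  show ?case
  proof
    fix u assume u: "u \<in> dist_ball G w (Suc j)"
    show "u \<in> dist_ball G' w (Suc j)"
    proof (cases "u \<in> dist_ball G w j")
      case True
      then show ?thesis using Suc by auto
    next
      case False
      then obtain b where b: "u \<in> fst G" "b \<in> dist_ball G w j" "adj G b u" using u by auto
      have "dist_ball G w (Suc j) \<subseteq> dist_ball G w R" by (rule dist_ball_mono[OF Suc.prems])
      then have "b \<notin> T" "u \<notin> T" using disj u b(2) by auto
      then show ?thesis using b V adj_eq Suc by auto
    qed
  qed
qed

lemma rooted_iso_cong: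
  assumes "fst H = fst H'" "\<And>u w. u \<in> fst H \<Longrightarrow> w \<in> fst H \<Longrightarrow> adj H u w = adj H' u w"
    "\<And>u. u \<in> fst H \<Longrightarrow> \<sigma> u = \<sigma>' u"
  shows "rooted_iso H v \<sigma> \<theta> r \<tau> = rooted_iso H' v \<sigma>' \<theta> r \<tau>"
  unfolding rooted_iso_def assms(1)[symmetric]
  by (intro ex_cong1 conj_cong refl ball_cong) (auto simp: assms)

lemma rooted_iso_nbhd_eq_outside:
  assumes V: "fst G = fst G'"
    and adj_eq: "\<And>a b. a \<notin> T \<Longrightarrow> b \<notin> T \<Longrightarrow> adj G a b = adj G' a b"
    and disj: "dist_ball G w R \<inter> T = {}" "dist_ball G' w R \<inter> T = {}"
    and col: "\<And>u. u \<notin> T \<Longrightarrow> \<sigma> u = \<sigma>' u"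
  shows "rooted_iso (nbhd G w R) w \<sigma> \<theta> r \<tau> = rooted_iso (nbhd G' w R) w \<sigma>' \<theta> r \<tau>"
proof (rule rooted_iso_cong)
  have "dist_ball G w R \<subseteq> dist_ball G' w R"
    by (rule dist_ball_subset_outside[OF V adj_eq disj(1) order.refl])
  moreover have "dist_ball G' w R \<subseteq> dist_ball G w R"
    by (rule dist_ball_subset_outside[OF V[symmetric] _ disj(2) order.refl]) (simp add: adj_eq)
  ultimately have B: "dist_ball G w R = dist_ball G' w R" by blast
  then show "fst (nbhd G w R) = fst (nbhd G' w R)" using V by (simp add: nbhd_def induced_def)
  fix u v assume "u \<in> fst (nbhd G w R)" "v \<in> fst (nbhd G w R)"
  then have "u \<notin> T" "v \<notin> T" using disj(1) by (auto simp: nbhd_def induced_def)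
  then show "adj (nbhd G w R) u v = adj (nbhd G' w R) u v"
    using adj_eq[of u v] B by (simp add: nbhd_def induced_def adj_def)
next
  fix u assume "u \<in> fst (nbhd G w R)"
  then have "u \<notin> T" using disj(1) by (auto simp: nbhd_def induced_def)
  then show "\<sigma> u = \<sigma>' u" by (rule col)
qed

section \<open>The planted replica model as a product of independent coordinates\<close>

text \<open>There is one coordinate for each singleton \<open>{v}\<close>, carrying the two colours of \<open>v\<close> (and
  \<open>False\<close>), and one for each pair \<open>{u, w}\<close>, carrying the coin that decides whether \<open>{u, w}\<close> is an
  edge in case it is allowed by the colourings. Grouping the coordinate \<open>e\<close> into the block
  \<open>Max e\<close>, the block of a vertex holds its colours and the coins towards smaller vertices.\<close>

type_synonym coords_vec = "real set \<Rightarrow> nat \<times> nat \<times> bool"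

definition vertex_singletons :: "nat \<Rightarrow> real set set" where
  "vertex_singletons n = (\<lambda>v. {v}) ` vset n"

definition vertex_pairs :: "nat \<Rightarrow> real set set" where
  "vertex_pairs n = {{u, w} | u w. u \<in> vset n \<and> w \<in> vset n \<and> u \<noteq> w}"

definition coords :: "nat \<Rightarrow> real set set" where
  "coords n = vertex_singletons n \<union> vertex_pairs n"

definition color_triples :: "nat \<Rightarrow> (nat \<times> nat \<times> bool) set" where
  "color_triples k = {1..k} \<times> {1..k} \<times> {False}"

definition coord_pmf :: "nat \<Rightarrow> real \<Rightarrow> real set \<Rightarrow> (nat \<times> nat \<times> bool) pmf" where
  "coord_pmf k p e =
     (if card e = 1 then pmf_of_set (color_triples k) else map_pmf (\<lambda>b. (0, 0, b)) (bernoulli_pmf p))"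

definition coords_pmf :: "nat \<Rightarrow> nat \<Rightarrow> real \<Rightarrow> coords_vec pmf" where
  "coords_pmf k n p = Pi_pmf (coords n) (0, 0, False) (coord_pmf k p)"

definition color1 :: "nat \<Rightarrow> coords_vec \<Rightarrow> real \<Rightarrow> nat" where
  "color1 n x v = (if v \<in> vset n then fst (x {v}) else undefined)"

definition color2 :: "nat \<Rightarrow> coords_vec \<Rightarrow> real \<Rightarrow> nat" where
  "color2 n x v = (if v \<in> vset n then fst (snd (x {v})) else undefined)"

definition coin :: "coords_vec \<Rightarrow> real set \<Rightarrow> bool" where
  "coin x e = snd (snd (x e))"

definition coords_graph :: "nat \<Rightarrow> coords_vec \<Rightarrow> rgraph" where
  "coords_graph n x = (vset n, {e \<in> allowed_pairs n (color1 n x) (color2 n x). coin x e})"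

definition coords_replica :: "nat \<Rightarrow> coords_vec \<Rightarrow> rgraph \<times> (real \<Rightarrow> nat) \<times> (real \<Rightarrow> nat)" where
  "coords_replica n x = (coords_graph n x, color1 n x, color2 n x)"

lemma finite_vset [simp]: "finite (vset n)"
  by (simp add: vset_def)

lemma card_vset [simp]: "card (vset n) = n"
  by (simp add: vset_def card_image inj_on_def)

lemma vset_empty_iff [simp]: "vset n = {} \<longleftrightarrow> n = 0"
  by (auto simp: vset_def)

lemma finite_vertex_pairs [simp]: "finite (vertex_pairs n)"
proof -
  have "vertex_pairs n \<subseteq> (\<lambda>(u, w). {u, w}) ` (vset n \<times> vset n)"
    by (auto simp: vertex_pairs_def)
  then show ?thesis by (rule finite_subset) auto
qed

lemma finite_vertex_singletons [simp]: "finite (vertex_singletons n)"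
  by (simp add: vertex_singletons_def)

lemma finite_coords [simp]: "finite (coords n)"
  by (simp add: coords_def)

lemma vertex_singletons_pairs_disjoint: "vertex_singletons n \<inter> vertex_pairs n = {}"
  by (auto simp: vertex_singletons_def vertex_pairs_def doubleton_eq_iff)

lemma Max_coords: "e \<in> coords n \<Longrightarrow> Max e \<in> vset n"
  by (auto simp: coords_def vertex_singletons_def vertex_pairs_def max_def)

lemma color_triples_ne: "k \<ge> 1 \<Longrightarrow> color_triples k \<noteq> {}"
  by (auto simp: color_triples_def)

lemma finite_set_coord_pmf: "k \<ge> 1 \<Longrightarrow> finite (set_pmf (coord_pmf k p e))"
  by (auto simp: coord_pmf_def color_triples_ne color_triples_def)

lemma coord_pmf_singleton: "e \<in> vertex_singletons n \<Longrightarrow> coord_pmf k p e = pmf_of_set (color_triples k)"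
  by (auto simp: coord_pmf_def vertex_singletons_def)

lemma coord_pmf_pair:
  "e \<in> vertex_pairs n \<Longrightarrow> coord_pmf k p e = map_pmf (\<lambda>b. (0, 0, b)) (bernoulli_pmf p)"
  by (auto simp: coord_pmf_def vertex_pairs_def)

lemma allowed_pairs_subset_vertex_pairs: "allowed_pairs n \<sigma>1 \<sigma>2 \<subseteq> vertex_pairs n"
  by (auto simp: allowed_pairs_def vertex_pairs_def)

lemma doubleton_in_allowed_pairs_iff:
  "{a, b} \<in> allowed_pairs n \<sigma>1 \<sigma>2 \<longleftrightarrow>
     a \<in> vset n \<and> b \<in> vset n \<and> a \<noteq> b \<and> \<sigma>1 a \<noteq> \<sigma>1 b \<and> \<sigma>2 a \<noteq> \<sigma>2 b"
  by (auto simp: allowed_pairs_def doubleton_eq_iff)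

lemma adj_coords_graph:
  "adj (coords_graph n x) a b \<longleftrightarrow> a \<in> vset n \<and> b \<in> vset n \<and> a \<noteq> b \<and>
     color1 n x a \<noteq> color1 n x b \<and> color2 n x a \<noteq> color2 n x b \<and> coin x {a, b}"
  unfolding adj_def coords_graph_def by (simp add: doubleton_in_allowed_pairs_iff)

lemma pmf_of_set_Times:
  assumes "finite A" "A \<noteq> {}" "finite B" "B \<noteq> {}"
  shows "pmf_of_set (A \<times> B) = pair_pmf (pmf_of_set A) (pmf_of_set B)"
proof (rule pmf_eqI)
  fix z :: "'a \<times> 'b"
  show "pmf (pmf_of_set (A \<times> B)) z = pmf (pair_pmf (pmf_of_set A) (pmf_of_set B)) z"
    using assms by (cases z) (simp add: pmf_pair card_cartesian_product indicator_def)
qed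

lemma random_edges_eq_restrict:
  assumes "A \<subseteq> vertex_pairs n"
  shows "random_edges p A =
    map_pmf (\<lambda>f. {e\<in>A. f e}) (Pi_pmf (vertex_pairs n) False (\<lambda>_. bernoulli_pmf p))"
proof -
  have "Pi_pmf A False (\<lambda>_. bernoulli_pmf p) = map_pmf (\<lambda>f x. if x \<in> A then f x else False)
      (Pi_pmf (vertex_pairs n) False (\<lambda>_. bernoulli_pmf p))"
    by (rule Pi_pmf_subset[OF finite_vertex_pairs assms])
  then show ?thesis
    unfolding random_edges_def by (simp add: pmf.map_comp o_def) (rule map_pmf_cong; auto)
qed

definition color_choices :: "nat \<Rightarrow> nat \<Rightarrow> coords_vec set" where
  "color_choices k n = PiE_dflt (vertex_singletons n) (0, 0, False) (\<lambda>_. color_triples k)"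

lemma finite_color_choices: "finite (color_choices k n)"
  unfolding color_choices_def by (intro finite_PiE_dflt) (auto simp: vertex_singletons_def color_triples_def)

lemma color_choices_ne: "k \<ge> 1 \<Longrightarrow> color_choices k n \<noteq> {}"
  unfolding color_choices_def using color_triples_ne by auto

lemma coords_pmf_split:
  assumes "k \<ge> 1"
  shows "coords_pmf k n p = map_pmf (\<lambda>(f, g) x. if x \<in> vertex_singletons n then f x else g x)
     (pair_pmf (pmf_of_set (color_choices k n))
        (map_pmf ((\<circ>) (\<lambda>b. (0::nat, 0::nat, b))) (Pi_pmf (vertex_pairs n) False (\<lambda>_. bernoulli_pmf p))))"
proof -
  have "coords_pmf k n p = map_pmf (\<lambda>(f, g) x. if x \<in> vertex_singletons n then f x else g x)
     (pair_pmf (Pi_pmf (vertex_singletons n) (0, 0, False) (coord_pmf k p))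
        (Pi_pmf (vertex_pairs n) (0, 0, False) (coord_pmf k p)))"
    unfolding coords_pmf_def coords_def
    by (rule Pi_pmf_union) (auto simp: vertex_singletons_pairs_disjoint)
  also have "Pi_pmf (vertex_singletons n) (0, 0, False) (coord_pmf k p)
      = Pi_pmf (vertex_singletons n) (0, 0, False) (\<lambda>_. pmf_of_set (color_triples k))"
    by (intro Pi_pmf_cong) (auto simp: coord_pmf_singleton)
  also have "\<dots> = pmf_of_set (color_choices k n)"
    unfolding color_choices_def using assms color_triples_ne
    by (intro Pi_pmf_of_set) (auto simp: vertex_singletons_def color_triples_def)
  also have "Pi_pmf (vertex_pairs n) (0, 0, False) (coord_pmf k p)
      = Pi_pmf (vertex_pairs n) (0, 0, False) (\<lambda>_. map_pmf (\<lambda>b. (0::nat, 0::nat, b)) (bernoulli_pmf p))"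
    by (intro Pi_pmf_cong) (auto simp: coord_pmf_pair)
  also have "\<dots> = map_pmf ((\<circ>) (\<lambda>b. (0::nat, 0::nat, b))) (Pi_pmf (vertex_pairs n) False (\<lambda>_. bernoulli_pmf p))"
    by (rule Pi_pmf_map) auto
  finally show ?thesis .
qed

lemma colors_image_color_choices:
  "(\<lambda>x. (color1 n x, color2 n x)) ` color_choices k n = col_maps n k \<times> col_maps n k"
proof (intro equalityI subsetI)
  fix z assume "z \<in> (\<lambda>x. (color1 n x, color2 n x)) ` color_choices k n"
  then obtain x where x: "x \<in> color_choices k n" "z = (color1 n x, color2 n x)" by auto
  have "x {v} \<in> color_triples k" if "v \<in> vset n" for v
    using x that by (auto simp: color_choices_def PiE_dflt_def vertex_singletons_def)
  then have "fst (x {v}) \<in> {1..k} \<and> fst (snd (x {v})) \<in> {1..k}" if "v \<in> vset n" for v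
    using that unfolding color_triples_def by (auto simp: mem_Times_iff)
  then show "z \<in> col_maps n k \<times> col_maps n k"
    using x by (auto simp: col_maps_def color1_def color2_def)
next
  fix z assume z: "z \<in> col_maps n k \<times> col_maps n k"
  obtain \<sigma>1 \<sigma>2 where \<sigma>: "z = (\<sigma>1, \<sigma>2)" by (cases z)
  define x where "x = (\<lambda>e. if e \<in> vertex_singletons n
      then (\<sigma>1 (the_elem e), \<sigma>2 (the_elem e), False) else (0, 0, False))"
  have "x \<in> color_choices k n"
    using z \<sigma> by (auto simp: x_def color_choices_def PiE_dflt_def vertex_singletons_def
        col_maps_def color_triples_def)
  moreover have "color1 n x = \<sigma>1" "color2 n x = \<sigma>2"
    using z \<sigma> by (auto simp: x_def color1_def color2_def vertex_singletons_def col_maps_def fun_eq_iff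
        PiE_def extensional_def)
  ultimately show "z \<in> (\<lambda>x. (color1 n x, color2 n x)) ` color_choices k n" using \<sigma> by auto
qed

lemma inj_on_colors_color_choices: "inj_on (\<lambda>x. (color1 n x, color2 n x)) (color_choices k n)"
proof (rule inj_onI)
  fix x y assume x: "x \<in> color_choices k n" and y: "y \<in> color_choices k n"
    and eq: "(color1 n x, color2 n x) = (color1 n y, color2 n y)"
  show "x = y"
  proof
    fix e
    show "x e = y e"
    proof (cases "e \<in> vertex_singletons n")
      case True
      then obtain v where v: "v \<in> vset n" "e = {v}" by (auto simp: vertex_singletons_def)
      have "fst (x {v}) = fst (y {v})" "fst (snd (x {v})) = fst (snd (y {v}))"
        using eq v by (auto simp: color1_def color2_def fun_eq_iff dest: spec[of _ v])
      moreover have "x {v} \<in> color_triples k" "y {v} \<in> color_triples k"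
        using x y v by (auto simp: color_choices_def PiE_dflt_def vertex_singletons_def)
      ultimately show ?thesis using v by (auto simp: prod_eq_iff color_triples_def)
    next
      case False
      then show ?thesis using x y by (auto simp: color_choices_def PiE_dflt_def)
    qed
  qed
qed

lemma planted_replica_eq_map_coords_pmf:
  assumes k: "k \<ge> 1"
  shows "planted_replica k n p = map_pmf (coords_replica n) (coords_pmf k n p)"
proof -
  define B where "B = Pi_pmf (vertex_pairs n) False (\<lambda>_. bernoulli_pmf p)"
  define U where "U = pmf_of_set (col_maps n k)"
  define H where "H = (\<lambda>(\<sigma>1, \<sigma>2) (f :: real set \<Rightarrow> bool).
      ((vset n, {e\<in>allowed_pairs n \<sigma>1 \<sigma>2. f e}), \<sigma>1, \<sigma>2))"
  have planted: "planted_replica k n p = map_pmf (case_prod H) (pair_pmf (pair_pmf U U) B)"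
    unfolding planted_replica_def random_edges_eq_restrict[OF allowed_pairs_subset_vertex_pairs]
      U_def[symmetric] B_def[symmetric]
    by (simp add: pair_pmf_def map_pmf_def bind_assoc_pmf bind_return_pmf H_def)
  have colors: "pair_pmf U U = map_pmf (\<lambda>x. (color1 n x, color2 n x)) (pmf_of_set (color_choices k n))"
    unfolding U_def using k
    by (subst map_pmf_of_set_inj[OF inj_on_colors_color_choices color_choices_ne finite_color_choices])
      (auto simp: colors_image_color_choices pmf_of_set_Times col_maps_def finite_PiE PiE_eq_empty_iff)
  have merge: "coords_replica n ((\<lambda>(f, g) x. if x \<in> vertex_singletons n then f x else g x)
        (apsnd ((\<circ>) (\<lambda>b. (0::nat, 0::nat, b))) z))
      = case_prod H (apfst (\<lambda>x. (color1 n x, color2 n x)) z)" for z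
  proof -
    obtain x f where z: "z = (x, f)" by (cases z)
    let ?m = "\<lambda>y. if y \<in> vertex_singletons n then x y else ((\<lambda>b. (0::nat, 0::nat, b)) \<circ> f) y"
    have "color1 n ?m = color1 n x" "color2 n ?m = color2 n x"
      by (auto simp: color1_def color2_def vertex_singletons_def fun_eq_iff)
    moreover have "{e \<in> allowed_pairs n (color1 n x) (color2 n x). coin ?m e}
        = {e \<in> allowed_pairs n (color1 n x) (color2 n x). f e}"
      using allowed_pairs_subset_vertex_pairs[of n "color1 n x" "color2 n x"]
        vertex_singletons_pairs_disjoint[of n]
      by (auto simp: coin_def)
    ultimately show ?thesis by (simp add: z coords_replica_def coords_graph_def H_def)
  qed
  have "map_pmf (coords_replica n) (coords_pmf k n p) = map_pmf (case_prod H) (pair_pmf (pair_pmf U U) B)"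
    unfolding coords_pmf_split[OF k] colors B_def[symmetric] pair_map_pmf2 pair_map_pmf1 pmf.map_comp
      o_def merge ..
  then show ?thesis using planted by simp
qed

section \<open>Locality of the neighbourhood statistic\<close>

lemma colors_eq_outside_diff_blocks:
  assumes "u \<notin> diff_blocks (coords n) Max x y"
  shows "color1 n x u = color1 n y u" "color2 n x u = color2 n y u"
proof -
  have "x {u} = y {u}" if "u \<in> vset n"
    using that assms eq_if_block_notin_diff_blocks[of "{u}" "coords n" Max x y]
    by (simp add: coords_def vertex_singletons_def)
  then show "color1 n x u = color1 n y u" "color2 n x u = color2 n y u"
    by (auto simp: color1_def color2_def)
qed

lemma adj_coords_graph_eq_outside_diff_blocks:
  assumes "a \<notin> diff_blocks (coords n) Max x y" "b \<notin> diff_blocks (coords n) Max x y"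
  shows "adj (coords_graph n x) a b = adj (coords_graph n y) a b"
proof (cases "a \<in> vset n \<and> b \<in> vset n \<and> a \<noteq> b")
  case True
  then have "{a, b} \<in> coords n" by (auto simp: coords_def vertex_pairs_def)
  moreover have "Max {a, b} \<in> {a, b}" by (rule Max_in) auto
  ultimately have "x {a, b} = y {a, b}"
    using assms by (metis eq_if_block_notin_diff_blocks insertE singletonD)
  then show ?thesis
    using colors_eq_outside_diff_blocks[OF assms(1)] colors_eq_outside_diff_blocks[OF assms(2)]
    by (simp add: adj_coords_graph coin_def)
next
  case False
  then show ?thesis by (auto simp: adj_coords_graph)
qed

definition nbhd_matches :: "nat \<Rightarrow> rgraph \<Rightarrow> real \<Rightarrow> (real \<Rightarrow> nat) \<Rightarrow> (real \<Rightarrow> nat) \<Rightarrow> nat \<Rightarrow>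
    coords_vec \<Rightarrow> real \<Rightarrow> real" where
  "nbhd_matches n \<theta> r \<tau>1 \<tau>2 \<omega> x w =
     of_bool (rooted_iso (nbhd (coords_graph n x) w \<omega>) w (color1 n x) \<theta> r \<tau>1) *
     of_bool (rooted_iso (nbhd (coords_graph n x) w \<omega>) w (color2 n x) \<theta> r \<tau>2)"

lemma Qstat_coords_replica:
  "Qstat n \<theta> r \<tau>1 \<tau>2 \<omega> (coords_replica n x) =
     (\<Sum>w\<in>vset n. nbhd_matches n \<theta> r \<tau>1 \<tau>2 \<omega> x w) / real n"
  by (simp add: Qstat_def coords_replica_def nbhd_matches_def)

lemma Qstat_coords_replica_bounds:
  "0 \<le> Qstat n \<theta> r \<tau>1 \<tau>2 \<omega> (coords_replica n x) \<and> Qstat n \<theta> r \<tau>1 \<tau>2 \<omega> (coords_replica n x) \<le> 1"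
proof -
  have "(\<Sum>w\<in>vset n. nbhd_matches n \<theta> r \<tau>1 \<tau>2 \<omega> x w) \<le> (\<Sum>w\<in>vset n. 1)"
    by (intro sum_mono) (simp add: nbhd_matches_def)
  moreover have "0 \<le> (\<Sum>w\<in>vset n. nbhd_matches n \<theta> r \<tau>1 \<tau>2 \<omega> x w)"
    by (intro sum_nonneg) (simp add: nbhd_matches_def)
  ultimately show ?thesis unfolding Qstat_coords_replica by (auto simp: divide_le_eq_1)
qed

lemma nbhd_matches_eq_outside:
  assumes "dist_ball (coords_graph n x) w \<omega> \<inter> diff_blocks (coords n) Max x y = {}"
    and "dist_ball (coords_graph n y) w \<omega> \<inter> diff_blocks (coords n) Max x y = {}"
  shows "nbhd_matches n \<theta> r \<tau>1 \<tau>2 \<omega> x w = nbhd_matches n \<theta> r \<tau>1 \<tau>2 \<omega> y w"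
proof -
  have V: "fst (coords_graph n x) = fst (coords_graph n y)" by (simp add: coords_graph_def)
  note local = rooted_iso_nbhd_eq_outside[OF V adj_coords_graph_eq_outside_diff_blocks assms]
  show ?thesis
    unfolding nbhd_matches_def
    using local[of "color1 n x" "color1 n y"] local[of "color2 n x" "color2 n y"]
      colors_eq_outside_diff_blocks
    by auto
qed

definition bounded_degree_coords :: "nat \<Rightarrow> nat \<Rightarrow> coords_vec set" where
  "bounded_degree_coords n \<Delta> = {x. \<forall>a. card {u\<in>vset n. adj (coords_graph n x) a u} \<le> \<Delta>}"

text \<open>Only vertices within distance \<open>\<omega>\<close> of a block in which \<open>x\<close> and \<open>y\<close> differ, in one of
  the two graphs, can see different neighbourhoods; with degrees at most \<open>\<Delta>\<close> there are at most
  \<open>2 (\<Delta> + 1)^\<omega>\<close> of them per block.\<close>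

lemma Qstat_coords_replica_lipschitz:
  assumes x: "x \<in> bounded_degree_coords n \<Delta>" and y: "y \<in> bounded_degree_coords n \<Delta>"
  shows "\<bar>Qstat n \<theta> r \<tau>1 \<tau>2 \<omega> (coords_replica n x) - Qstat n \<theta> r \<tau>1 \<tau>2 \<omega> (coords_replica n y)\<bar>
         \<le> 2 * real ((\<Delta> + 1) ^ \<omega>) / real n * real (card (diff_blocks (coords n) Max x y))"
proof -
  let ?T = "diff_blocks (coords n) Max x y"
  let ?Q = "nbhd_matches n \<theta> r \<tau>1 \<tau>2 \<omega>"
  let ?near = "\<lambda>z. {w\<in>vset n. dist_ball (coords_graph n z) w \<omega> \<inter> ?T \<noteq> {}}"
  define N where "N = ?near x \<union> ?near y"
  have fst_graph: "fst (coords_graph n z) = vset n" for z by (simp add: coords_graph_def)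
  have near: "card (?near z) \<le> card ?T * (\<Delta> + 1) ^ \<omega>"
    if "z \<in> bounded_degree_coords n \<Delta>" for z
    using card_near_le[of "coords_graph n z" \<Delta> ?T \<omega>] that
    by (simp add: fst_graph bounded_degree_coords_def)
  then have "card N \<le> 2 * card ?T * (\<Delta> + 1) ^ \<omega>"
    unfolding N_def using card_Un_le[of "?near x" "?near y"] near[OF x] near[OF y] by linarith
  then have card_N: "real (card N) \<le> 2 * real ((\<Delta> + 1) ^ \<omega>) * real (card ?T)"
    by (metis of_nat_mono of_nat_mult of_nat_numeral mult.assoc mult.commute)
  have "(\<Sum>w\<in>vset n. ?Q x w - ?Q y w) = (\<Sum>w\<in>N. ?Q x w - ?Q y w)"
    using nbhd_matches_eq_outside by (intro sum.mono_neutral_right) (auto simp: N_def)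
  also have "\<bar>\<dots>\<bar> \<le> (\<Sum>w\<in>N. 1)"
    by (rule order.trans[OF sum_abs sum_mono]) (simp add: nbhd_matches_def)
  finally have "\<bar>(\<Sum>w\<in>vset n. ?Q x w) - (\<Sum>w\<in>vset n. ?Q y w)\<bar> \<le> real (card N)"
    by (simp add: sum_subtractf)
  with card_N show ?thesis
    unfolding Qstat_coords_replica diff_divide_distrib[symmetric] abs_divide
    by (cases "n = 0") (auto simp: divide_right_mono)
qed

lemma prob_coins_towards:
  assumes p: "0 \<le> p" "p \<le> 1" and a: "a \<in> vset n" and W: "W \<subseteq> vset n - {a}"
  shows "measure_pmf.prob (coords_pmf k n p) {x. \<forall>u\<in>W. coin x {a, u}} = p ^ card W"
proof -
  define EW where "EW = (\<lambda>u. {a, u}) ` W"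
  have EW_pairs: "EW \<subseteq> vertex_pairs n"
  proof
    fix e assume "e \<in> EW"
    then obtain u where "u \<in> W" "e = {a, u}" by (auto simp: EW_def)
    then show "e \<in> vertex_pairs n" using a W unfolding vertex_pairs_def by blast
  qed
  then have EW_coords: "EW \<subseteq> coords n" by (auto simp: coords_def)
  have card_EW: "card EW = card W"
    unfolding EW_def using W by (intro card_image) (auto simp: inj_on_def doubleton_eq_iff)
  define B where "B = (\<lambda>e. if e \<in> EW then {z :: nat \<times> nat \<times> bool. snd (snd z)} else UNIV)"
  have "{x. \<forall>u\<in>W. coin x {a, u}} = Pi (coords n) B"
    using EW_coords by (auto simp: B_def EW_def coin_def Pi_def)
  then have "measure_pmf.prob (coords_pmf k n p) {x. \<forall>u\<in>W. coin x {a, u}}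
      = (\<Prod>e\<in>coords n. measure_pmf.prob (coord_pmf k p e) (B e))"
    unfolding coords_pmf_def by (simp add: measure_Pi_pmf_Pi)
  also have "\<dots> = (\<Prod>e\<in>EW. measure_pmf.prob (coord_pmf k p e) (B e))"
    using EW_coords by (intro prod.mono_neutral_right) (auto simp: B_def)
  also have "\<dots> = (\<Prod>e\<in>EW. p)"
  proof (intro prod.cong refl)
    fix e assume e: "e \<in> EW"
    then have "coord_pmf k p e = map_pmf (\<lambda>b. (0, 0, b)) (bernoulli_pmf p)"
      using EW_pairs by (intro coord_pmf_pair) auto
    moreover have "{b. b} = {True}" by auto
    ultimately have "measure_pmf.prob (coord_pmf k p e) (B e) = measure_pmf.prob (bernoulli_pmf p) {True}"
      using e by (simp add: B_def vimage_def)
    then show "measure_pmf.prob (coord_pmf k p e) (B e) = p"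
      using p by (simp add: measure_pmf_single)
  qed
  finally show ?thesis using card_EW by simp
qed

lemma real_binomial_le_pow_div_fact: "real (N choose m) \<le> real N ^ m / fact m"
proof -
  have "real ((N choose m) * fact m) \<le> real (N ^ m)"
    by (rule of_nat_mono[OF binomial_fact_pow])
  then show ?thesis by (simp add: field_simps)
qed

text \<open>Union bound over a vertex and \<open>\<Delta> + 1\<close> of its potential neighbours.\<close>

lemma prob_not_bounded_degree_coords:
  assumes p: "0 \<le> p" "p \<le> 1"
  shows "measure_pmf.prob (coords_pmf k n p) (- bounded_degree_coords n \<Delta>)
    \<le> real n * (real n * p) ^ Suc \<Delta> / fact (Suc \<Delta>)"
proof -
  let ?m = "Suc \<Delta>"
  let ?P = "coords_pmf k n p"
  define Ws where "Ws = (\<lambda>a. {W. W \<subseteq> vset n - {a} \<and> card W = ?m})"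
  define Ev where "Ev = (\<lambda>a W. {x. \<forall>u\<in>W. coin x {a, u}})"
  have fin_Ws: "finite (Ws a)" for a
    unfolding Ws_def by (rule finite_subset[of _ "Pow (vset n)"]) auto
  have "- bounded_degree_coords n \<Delta> \<subseteq> (\<Union>a\<in>vset n. \<Union>W\<in>Ws a. Ev a W)"
  proof
    fix x assume "x \<in> - bounded_degree_coords n \<Delta>"
    then obtain a where "\<not> card {u\<in>vset n. adj (coords_graph n x) a u} \<le> \<Delta>"
      by (auto simp: bounded_degree_coords_def)
    then have big: "?m \<le> card {u\<in>vset n. adj (coords_graph n x) a u}" by linarith
    have a: "a \<in> vset n"
    proof (rule ccontr)
      assume "a \<notin> vset n"
      then have "{u\<in>vset n. adj (coords_graph n x) a u} = {}" by (auto simp: adj_coords_graph)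
      then have "card {u\<in>vset n. adj (coords_graph n x) a u} = 0" by (simp only: card.empty)
      then show False using big by linarith
    qed
    have "card {u\<in>vset n. adj (coords_graph n x) a u} \<le> card {u\<in>vset n - {a}. coin x {a, u}}"
      by (intro card_mono) (auto simp: adj_coords_graph)
    with big have "?m \<le> card {u\<in>vset n - {a}. coin x {a, u}}" by linarith
    then obtain W where "W \<subseteq> {u\<in>vset n - {a}. coin x {a, u}}" "card W = ?m"
      by (rule obtain_subset_with_card_n)
    then show "x \<in> (\<Union>a\<in>vset n. \<Union>W\<in>Ws a. Ev a W)"
      using a by (auto simp: Ws_def Ev_def)
  qed
  then have "measure_pmf.prob ?P (- bounded_degree_coords n \<Delta>)
      \<le> measure_pmf.prob ?P (\<Union>a\<in>vset n. \<Union>W\<in>Ws a. Ev a W)"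
    by (intro measure_pmf.finite_measure_mono) auto
  also have "\<dots> \<le> (\<Sum>a\<in>vset n. measure_pmf.prob ?P (\<Union>W\<in>Ws a. Ev a W))"
    by (intro measure_UNION_le) auto
  also have "\<dots> \<le> (\<Sum>a\<in>vset n. \<Sum>W\<in>Ws a. measure_pmf.prob ?P (Ev a W))"
    by (intro sum_mono measure_UNION_le fin_Ws) auto
  also have "\<dots> = (\<Sum>a\<in>vset n. real ((n - 1) choose ?m) * p ^ ?m)"
  proof (intro sum.cong refl)
    fix a assume a: "a \<in> vset n"
    have "card (Ws a) = (n - 1) choose ?m"
      unfolding Ws_def using a by (subst n_subsets) simp_all
    moreover have "(\<Sum>W\<in>Ws a. measure_pmf.prob ?P (Ev a W)) = (\<Sum>W\<in>Ws a. p ^ ?m)"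
      using p a by (intro sum.cong refl) (auto simp: Ev_def Ws_def prob_coins_towards)
    ultimately show "(\<Sum>W\<in>Ws a. measure_pmf.prob ?P (Ev a W)) = real ((n - 1) choose ?m) * p ^ ?m"
      by simp
  qed
  also have "\<dots> \<le> (\<Sum>a\<in>vset n. real n ^ ?m / fact ?m * p ^ ?m)"
  proof (intro sum_mono mult_right_mono)
    have "real ((n - 1) choose ?m) \<le> real (n - 1) ^ ?m / fact ?m"
      by (rule real_binomial_le_pow_div_fact)
    also have "\<dots> \<le> real n ^ ?m / fact ?m"
      by (intro divide_right_mono power_mono) auto
    finally show "real ((n - 1) choose ?m) \<le> real n ^ ?m / fact ?m" .
  qed (use p in simp)
  also have "\<dots> = real n * (real n * p) ^ ?m / fact ?m"
    by (simp add: power_mult_distrib)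
  finally show ?thesis .
qed

lemma Qstat_concentration:
  fixes k n \<Delta> :: nat and p t :: real
  defines "\<beta> \<equiv> real n * (real n * p) ^ Suc \<Delta> / fact (Suc \<Delta>)"
  assumes k: "k \<ge> 1" and p: "0 \<le> p" "p \<le> 1" and n: "n > 0" and t: "t > 0"
    and \<beta>: "\<beta> < 1" "\<beta> * (1 + 2 * real (Suc \<Delta>) ^ \<omega>) \<le> t / 2"
  shows "measure_pmf.prob (planted_replica k n p)
      {X. \<bar>Qstat n \<theta> r \<tau>1 \<tau>2 \<omega> X -
            measure_pmf.expectation (planted_replica k n p) (Qstat n \<theta> r \<tau>1 \<tau>2 \<omega>)\<bar> > t}
    \<le> \<beta> + 2 * exp (- (t / 2)\<^sup>2 / (2 * (real n * (2 * real (Suc \<Delta>) ^ \<omega> / real n)\<^sup>2)))"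
proof -
  define c where "c = 2 * real (Suc \<Delta>) ^ \<omega> / real n"
  have c: "c > 0" using n by (simp add: c_def)
  let ?F = "\<lambda>x. Qstat n \<theta> r \<tau>1 \<tau>2 \<omega> (coords_replica n x)"
  let ?P = "Pi_pmf (coords n) (0, 0, False) (coord_pmf k p)"
  have "measure_pmf.prob (coords_pmf k n p)
      {x. \<bar>?F x - measure_pmf.expectation (coords_pmf k n p) ?F\<bar> > t}
    \<le> \<beta> + 2 * exp (- (t / 2)\<^sup>2 / (2 * (real (card (vset n)) * c\<^sup>2)))"
    unfolding coords_pmf_def
  proof (rule mcdiarmid_Pi_pmf_bad_event[where blk = Max and S = "bounded_degree_coords n \<Delta>"])
    show "Max ` coords n \<subseteq> vset n" using Max_coords by blast
    show "measure_pmf.prob ?P (- bounded_degree_coords n \<Delta>) \<le> \<beta>"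
      unfolding \<beta>_def coords_pmf_def[symmetric] using p by (rule prob_not_bounded_degree_coords)
    show "?F x \<le> ?F y + c * real (card (diff_blocks (coords n) Max x y))"
      if "x \<in> bounded_degree_coords n \<Delta> \<inter> set_pmf ?P" "y \<in> bounded_degree_coords n \<Delta> \<inter> set_pmf ?P"
      for x y
      using Qstat_coords_replica_lipschitz[of x n \<Delta> y \<theta> r \<tau>1 \<tau>2 \<omega>] that by (simp add: c_def)
    show "(1 + c * real (card (vset n))) * \<beta> \<le> t / 2"
      using \<beta>(2) n by (simp add: c_def algebra_simps)
  qed (use k n t c \<beta>(1) Qstat_coords_replica_bounds finite_set_coord_pmf in auto)
  then show ?thesis
    unfolding planted_replica_eq_map_coords_pmf[OF k] c_def by simp
qed

section \<open>Asymptotics\<close>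

lemma power_le_fact_mult_exp:
  fixes x :: real
  assumes "x \<ge> 0"
  shows "x ^ q \<le> fact q * exp x"
proof -
  have s: "(\<lambda>n. x ^ n /\<^sub>R fact n) sums exp x" by (rule exp_converges)
  have "(\<Sum>n\<in>{q}. x ^ n /\<^sub>R fact n) \<le> (\<Sum>n. x ^ n /\<^sub>R fact n)"
    using s assms by (intro sum_le_suminf) (auto simp: sums_iff)
  also have "\<dots> = exp x" using s by (simp add: sums_iff)
  finally have "x ^ q / fact q \<le> exp x" by (simp add: divide_inverse mult.commute)
  then show ?thesis by (simp add: divide_le_eq mult.commute)
qed

lemma eventually_mult_power_le_exp:
  fixes a C :: real
  assumes a: "a > 0"
  shows "\<forall>\<^sub>F x in at_top. C * x ^ q \<le> exp (a * x)"
proof -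
  have "((\<lambda>x. (a * x) ^ q / exp (a * x)) \<longlongrightarrow> 0) at_top"
    using tendsto_power_div_exp_0
      filterlim_tendsto_pos_mult_at_top[OF tendsto_const a filterlim_ident]
    by (rule filterlim_compose)
  then have "\<forall>\<^sub>F x in at_top. (a * x) ^ q / exp (a * x) < a ^ q / (\<bar>C\<bar> + 1)"
    using a by (intro order_tendstoD) auto
  then show ?thesis
    using eventually_ge_at_top[of 0]
  proof eventually_elim
    case (elim x)
    then have "(\<bar>C\<bar> + 1) * (a ^ q * x ^ q) < a ^ q * exp (a * x)"
      by (simp add: field_simps power_mult_distrib)
    then have "(\<bar>C\<bar> + 1) * x ^ q \<le> exp (a * x)"
      using a by (simp add: mult.left_commute)
    moreover have "C * x ^ q \<le> (\<bar>C\<bar> + 1) * x ^ q"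
      using elim by (intro mult_right_mono) auto
    ultimately show ?case by linarith
  qed
qed

lemma binomial_tail_le_exp:
  fixes n m :: nat and p K :: real
  assumes p: "0 \<le> p" "real n * p \<le> K" and K: "K > 0" and m: "exp 2 * K \<le> real m"
  shows "real n * (real n * p) ^ m / fact m \<le> real n * exp (- real m)"
proof -
  have "K \<le> real m * exp (-2)" using m by (simp add: exp_minus field_simps)
  then have "(real n * p) ^ m \<le> (real m * exp (-2)) ^ m"
    using p by (intro power_mono) auto
  also have "\<dots> = real m ^ m * exp (- real m) * exp (- real m)"
    by (simp add: power_mult_distrib exp_of_nat_mult[symmetric] mult_exp_exp)
  also have "\<dots> \<le> fact m * exp (real m) * exp (- real m) * exp (- real m)"
    using power_le_fact_mult_exp[of "real m" m] by (intro mult_right_mono) auto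
  also have "\<dots> = fact m * exp (- real m)" by (simp add: exp_minus)
  finally have "(real n * p) ^ m / fact m \<le> exp (- real m)"
    by (simp add: divide_le_eq mult.commute)
  then have "real n * ((real n * p) ^ m / fact m) \<le> real n * exp (- real m)"
    by (rule mult_left_mono) simp
  then show ?thesis by simp
qed

lemma degree_term_le:
  fixes L w :: real
  assumes L: "L \<ge> 4" and w: "1 \<le> w" "w \<le> 2 ^ \<omega> * L ^ (2 * \<omega>)"
    and poly: "6 * 2 ^ \<omega> * L ^ (2 * \<omega>) \<le> exp (L / 6)"
  shows "exp (L - L\<^sup>2) * (1 + 2 * w) \<le> exp (- L / 3) / 2"
proof -
  have "4 * L \<le> L\<^sup>2" using L by (simp add: power2_eq_square mult_right_mono)
  then have "L - L\<^sup>2 + L / 6 \<le> - L / 3" using L by linarith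
  have "1 + 2 * w \<le> exp (L / 6) / 2" using w poly by linarith
  then have "exp (L - L\<^sup>2) * (1 + 2 * w) \<le> exp (L - L\<^sup>2) * (exp (L / 6) / 2)"
    by (intro mult_left_mono) auto
  also have "\<dots> = exp (L - L\<^sup>2 + L / 6) / 2" by (simp only: exp_add)
  also have "\<dots> \<le> exp (- L / 3) / 2" using \<open>L - L\<^sup>2 + L / 6 \<le> - L / 3\<close> by simp
  finally show ?thesis .
qed

lemma mcdiarmid_term_ge:
  fixes L w :: real
  assumes L: "L \<ge> 0" and w: "1 \<le> w" "w \<le> 2 ^ \<omega> * L ^ (2 * \<omega>)"
    and poly: "32 * 4 ^ \<omega> * L ^ (4 * \<omega> + 2) \<le> exp (L / 3)"
  shows "L\<^sup>2 \<le> exp (L / 3) / (32 * w\<^sup>2)"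
proof -
  have "w\<^sup>2 \<le> (2 ^ \<omega> * L ^ (2 * \<omega>))\<^sup>2" using w by (intro power_mono) auto
  also have "\<dots> = ((2::real) ^ \<omega> * 2 ^ \<omega>) * (L ^ (2 * \<omega>) * L ^ (2 * \<omega>))"
    by (simp add: power2_eq_square mult_ac)
  also have "(2::real) ^ \<omega> * 2 ^ \<omega> = 4 ^ \<omega>" by (simp flip: power_mult_distrib)
  also have "L ^ (2 * \<omega>) * L ^ (2 * \<omega>) = L ^ (4 * \<omega>)" by (simp flip: power_add)
  finally have "32 * w\<^sup>2 * L\<^sup>2 \<le> 32 * (4 ^ \<omega> * L ^ (4 * \<omega>)) * L\<^sup>2"
    by (intro mult_right_mono) auto
  also have "\<dots> = 32 * 4 ^ \<omega> * L ^ (4 * \<omega> + 2)" by (simp add: power_add power2_eq_square)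
  also have "\<dots> \<le> exp (L / 3)" by (rule poly)
  finally have "L\<^sup>2 * (32 * w\<^sup>2) \<le> exp (L / 3)" by (simp add: mult_ac)
  moreover have "32 * w\<^sup>2 > 0" using w by simp
  ultimately show ?thesis by (simp add: le_divide_eq)
qed

lemma exp_tail_sum_le:
  fixes L :: real
  assumes L: "L \<ge> 4"
  shows "exp (L - L\<^sup>2) + 2 * exp (- L\<^sup>2) \<le> exp (- (1/2) * L\<^sup>2)"
proof -
  have "4 * L \<le> L\<^sup>2" using L by (simp add: power2_eq_square mult_right_mono)
  have "exp L + 2 \<le> 3 * exp L" using L by simp
  also have "\<dots> \<le> exp 4 * exp L"
    using exp_ge_add_one_self[of 4] by (intro mult_right_mono) auto
  also have "\<dots> = exp (L + 4)" by (simp add: exp_add)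
  also have "\<dots> \<le> exp (L\<^sup>2 / 2)" using L \<open>4 * L \<le> L\<^sup>2\<close> by simp
  finally have "exp (- L\<^sup>2) * (exp L + 2) \<le> exp (- L\<^sup>2) * exp (L\<^sup>2 / 2)"
    by (intro mult_left_mono) auto
  then show ?thesis by (simp add: algebra_simps flip: exp_add)
qed

lemma degree_cutoff_bounds:
  fixes L :: real
  assumes L: "L \<ge> 4" "L \<ge> real M0 + 2"
  shows "L\<^sup>2 \<le> real (Suc (nat \<lceil>L\<^sup>2\<rceil> + M0))" "real M0 \<le> real (Suc (nat \<lceil>L\<^sup>2\<rceil> + M0))"
    "real (Suc (nat \<lceil>L\<^sup>2\<rceil> + M0)) ^ \<omega> \<le> 2 ^ \<omega> * L ^ (2 * \<omega>)"
proof -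
  have "4 * L \<le> L\<^sup>2" using L(1) by (simp add: power2_eq_square mult_right_mono)
  then have "real (Suc (nat \<lceil>L\<^sup>2\<rceil> + M0)) \<le> 2 * L\<^sup>2"
    using of_int_ceiling_le_add_one[of "L\<^sup>2"] L by linarith
  then have "real (Suc (nat \<lceil>L\<^sup>2\<rceil> + M0)) ^ \<omega> \<le> (2 * L\<^sup>2) ^ \<omega>"
    by (rule power_mono[OF _ of_nat_0_le_iff])
  then show "real (Suc (nat \<lceil>L\<^sup>2\<rceil> + M0)) ^ \<omega> \<le> 2 ^ \<omega> * L ^ (2 * \<omega>)"
    by (simp add: power_mult_distrib power_mult)
  show "L\<^sup>2 \<le> real (Suc (nat \<lceil>L\<^sup>2\<rceil> + M0))" "real M0 \<le> real (Suc (nat \<lceil>L\<^sup>2\<rceil> + M0))"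
    by linarith+
qed

lemma Qstat_concentration_ln:
  fixes k n M0 :: nat and p K :: real
  defines "L \<equiv> ln (real n)"
  assumes k: "k \<ge> 1" and n: "n > 0" and p: "0 \<le> p" "p \<le> 1" "real n * p \<le> K"
    and K: "K > 0" "exp 2 * K \<le> real M0"
    and L: "L \<ge> 4" "L \<ge> real M0 + 2"
      "6 * 2 ^ \<omega> * L ^ (2 * \<omega>) \<le> exp (L / 6)" "32 * 4 ^ \<omega> * L ^ (4 * \<omega> + 2) \<le> exp (L / 3)"
  shows "measure_pmf.prob (planted_replica k n p)
      {X. \<bar>Qstat n \<theta> r \<tau>1 \<tau>2 \<omega> X -
            measure_pmf.expectation (planted_replica k n p) (Qstat n \<theta> r \<tau>1 \<tau>2 \<omega>)\<bar>
          > real n powr (-1/3)}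
    \<le> exp (- (1/2) * L\<^sup>2)"
proof -
  define \<Delta> where "\<Delta> = nat \<lceil>L\<^sup>2\<rceil> + M0"
  define \<beta> where "\<beta> = real n * (real n * p) ^ Suc \<Delta> / fact (Suc \<Delta>)"
  define w where "w = real (Suc \<Delta>) ^ \<omega>"
  have n_exp: "real n = exp L" using n by (simp add: L_def)
  have t: "real n powr (-1/3) = exp (- L / 3)" using n by (simp add: powr_def L_def)
  have "4 * L \<le> L\<^sup>2" using L(1) by (simp add: power2_eq_square mult_right_mono)
  note \<Delta> = degree_cutoff_bounds[OF L(1,2), folded \<Delta>_def]
  have w: "1 \<le> w" "w \<le> 2 ^ \<omega> * L ^ (2 * \<omega>)"
    unfolding w_def using \<Delta>(3) by (simp_all add: one_le_power)
  have "\<beta> \<le> real n * exp (- real (Suc \<Delta>))"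
    unfolding \<beta>_def using p(1,3) K \<Delta>(2) by (intro binomial_tail_le_exp) auto
  also have "\<dots> = exp (L - real (Suc \<Delta>))" by (simp add: n_exp mult_exp_exp)
  also have "\<dots> \<le> exp (L - L\<^sup>2)" using \<Delta>(1) by simp
  finally have \<beta>: "\<beta> \<le> exp (L - L\<^sup>2)" .
  have "\<beta> < 1" using \<beta> L(1) \<open>4 * L \<le> L\<^sup>2\<close> by (smt (verit) exp_less_one_iff)
  have "\<beta> * (1 + 2 * w) \<le> exp (L - L\<^sup>2) * (1 + 2 * w)" using \<beta> w by (intro mult_right_mono) auto
  also have "\<dots> \<le> exp (- L / 3) / 2" by (rule degree_term_le[OF L(1) w L(3)])
  finally have \<beta>_small: "\<beta> * (1 + 2 * w) \<le> exp (- L / 3) / 2" .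
  have exponent: "(exp (- L / 3) / 2)\<^sup>2 / (2 * (real n * (2 * w / real n)\<^sup>2)) = exp (L / 3) / (32 * w\<^sup>2)"
    using w(1) by (simp add: n_exp power2_eq_square field_simps flip: exp_add)
  have "measure_pmf.prob (planted_replica k n p)
      {X. \<bar>Qstat n \<theta> r \<tau>1 \<tau>2 \<omega> X -
            measure_pmf.expectation (planted_replica k n p) (Qstat n \<theta> r \<tau>1 \<tau>2 \<omega>)\<bar>
          > real n powr (-1/3)}
    \<le> \<beta> + 2 * exp (- (exp (L / 3) / (32 * w\<^sup>2)))"
    using Qstat_concentration[OF k p(1,2) n _ \<open>\<beta> < 1\<close>[unfolded \<beta>_def] \<beta>_small[unfolded \<beta>_def w_def]]
    unfolding t exponent[unfolded w_def, symmetric] \<beta>_def w_def by simp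
  also have "\<dots> \<le> exp (L - L\<^sup>2) + 2 * exp (- L\<^sup>2)"
  proof -
    have "L\<^sup>2 \<le> exp (L / 3) / (32 * w\<^sup>2)" using mcdiarmid_term_ge[OF _ w L(4)] L(1) by simp
    then have "exp (- (exp (L / 3) / (32 * w\<^sup>2))) \<le> exp (- L\<^sup>2)" by simp
    then show ?thesis using \<beta> by linarith
  qed
  also have "\<dots> \<le> exp (- (1/2) * L\<^sup>2)" using L(1) by (rule exp_tail_sum_le)
  finally show ?thesis .
qed

lemma eventually_ln_large:
  "\<forall>\<^sub>F n in sequentially. ln (real n) \<ge> 4 \<and> ln (real n) \<ge> A \<and>
      6 * 2 ^ \<omega> * ln (real n) ^ (2 * \<omega>) \<le> exp (ln (real n) / 6) \<and>
      32 * 4 ^ \<omega> * ln (real n) ^ (4 * \<omega> + 2) \<le> exp (ln (real n) / 3)"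
proof -
  have "\<forall>\<^sub>F L in at_top. L \<ge> 4 \<and> L \<ge> A \<and>
      6 * 2 ^ \<omega> * L ^ (2 * \<omega>) \<le> exp (L / 6) \<and> 32 * 4 ^ \<omega> * L ^ (4 * \<omega> + 2) \<le> exp (L / 3)"
    using eventually_mult_power_le_exp[of "1/6" "6 * 2 ^ \<omega>" "2 * \<omega>"]
      eventually_mult_power_le_exp[of "1/3" "32 * 4 ^ \<omega>" "4 * \<omega> + 2"]
    by (intro eventually_conj eventually_ge_at_top) (simp_all add: mult.commute)
  then show ?thesis
    by (rule eventually_compose_filterlim[OF _ filterlim_compose[OF ln_at_top filterlim_real_sequentially]])
qed

theorem lemma4p4:
  fixes k :: nat and p :: "nat \<Rightarrow> real" and \<theta> :: rgraph and r :: real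
    and \<tau>1 \<tau>2 :: "real \<Rightarrow> nat" and \<omega> :: nat
  assumes "k \<ge> 3"
    and "\<forall>n. 0 \<le> p n"
    and "p \<in> O(\<lambda>n. 1 / real n)"
    and "is_tree \<theta>" and "r \<in> fst \<theta>"
    and "\<tau>1 \<in> proper_colorings k \<theta>" and "\<tau>2 \<in> proper_colorings k \<theta>"
  shows "\<exists>c > 0. \<forall>\<^sub>F n in sequentially.
    measure_pmf.prob (planted_replica k n (p n))
      {X. \<bar>Qstat n \<theta> r \<tau>1 \<tau>2 \<omega> X -
            measure_pmf.expectation (planted_replica k n (p n)) (Qstat n \<theta> r \<tau>1 \<tau>2 \<omega>)\<bar>
          > real n powr (-1/3)}
    \<le> exp (- c * (ln (real n))\<^sup>2)"
proof -
  obtain K where K: "K > 0" "\<forall>\<^sub>F n in sequentially. norm (p n) \<le> K * norm (1 / real n)"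
    using assms(3) by (elim landau_o.bigE)
  define M0 where "M0 = nat \<lceil>exp 2 * K\<rceil>"
  have M0: "exp 2 * K \<le> real M0" unfolding M0_def by linarith
  note large_ln = eventually_ln_large[of "real M0 + 2" \<omega>]
  have "\<forall>\<^sub>F n in sequentially. real n \<ge> max K 1"
    using filterlim_real_sequentially unfolding filterlim_at_top by blast
  with K(2) large_ln have "\<forall>\<^sub>F n in sequentially.
    measure_pmf.prob (planted_replica k n (p n))
      {X. \<bar>Qstat n \<theta> r \<tau>1 \<tau>2 \<omega> X -
            measure_pmf.expectation (planted_replica k n (p n)) (Qstat n \<theta> r \<tau>1 \<tau>2 \<omega>)\<bar>
          > real n powr (-1/3)}
    \<le> exp (- (1/2) * (ln (real n))\<^sup>2)"
  proof eventually_elim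
    case (elim n)
    then have n: "n > 0" and np: "real n * p n \<le> K"
      using assms(2)[rule_format, of n] by (auto simp: field_simps)
    then have "real n * p n \<le> real n * 1" using elim by linarith
    then have "p n \<le> 1" using n by simp
    then show ?case
      using Qstat_concentration_ln[OF _ n assms(2)[rule_format] _ np K(1) M0] elim assms(1) by auto
  qed
  then show ?thesis by (intro exI[of _ "1/2"]) auto
qed

end
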